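(* Let $\{S_i\}_{i\in\mathcal I}$ be an IFS of contracting similarities on $\mathbb R^d$ satisfying the SSC, with attractor $K$, and let $\Delta\subset\mathcal P$ be arbitrary. Then the family $\{\mu_{\bm p}:\bm p\in\Delta\}$ has uniform densities.
   Context: $\mathcal I$ finite; $S_i$ contracting similarities with ratios $r_i\in(0,1)$; $K$ the unique nonempty compact set with $K=\bigcup_iS_i(K)$; SSC: $S_i(K)\cap S_j(K)=\varnothing$ for $i\ne j$. $\mathcal P$ is the set of probability vectors on $\mathcal I$; $\mu_{\bm p}$ is the unique Borel probability measure with $\mu_{\bm p}=\sum_ip_i\,\mu_{\bm p}\circ S_i^{-1}$. Definition: for a compact set $K\subset\mathbb R^d$, a set $\Delta$ of Borel probability measures each supported in $K$ has uniform densities if for every $\epsilon>0$ there exist a set $\mathcal E$ of Borel measures on $\mathbb R^d$ with $\sum_{\nu\in\mathcal E}\nu(\mathbb R^d)<\infty$ and a constant $\eta>0$ such that for all $\mu\in\Delta$, $r\in(0,\eta)$ and $x\in K$ there is $\nu\in\mathcal E$ with $\frac{\log\nu(B(x,r))}{\log r}\le\frac{\log\mu(B(x,r))}{\log r}+\epsilon$ (equivalently $r^\epsilon\mu(B(x,r))\le\nu(B(x,r))$). *)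

theory Defs
  imports "HOL-Probability.Probability"
begin

definition prob_vectors :: "'i set \<Rightarrow> ('i \<Rightarrow> real) set" where
  "prob_vectors I = {p. (\<forall>i\<in>I. 0 \<le> p i) \<and> (\<Sum>i\<in>I. p i) = 1}"

definition contracting_similarity :: "('a::metric_space \<Rightarrow> 'a) \<Rightarrow> real \<Rightarrow> bool" where
  "contracting_similarity f r \<longleftrightarrow> 0 < r \<and> r < 1 \<and> (\<forall>x y. dist (f x) (f y) = r * dist x y)"

definition is_self_similar_measure ::
  "'i set \<Rightarrow> ('i \<Rightarrow> 'a::euclidean_space \<Rightarrow> 'a) \<Rightarrow> ('i \<Rightarrow> real) \<Rightarrow> 'a measure \<Rightarrow> bool" where
  "is_self_similar_measure I S p mu \<longleftrightarrow>
     prob_space mu \<and> sets mu = sets borel \<and>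
     (\<forall>A\<in>sets borel. emeasure mu A = (\<Sum>i\<in>I. ennreal (p i) * emeasure mu (S i -` A)))"

text \<open>Uniform densities of a set of Borel probability measures supported in K
  (using the equivalent form r^eps mu(B(x,r)) <= nu(B(x,r))).\<close>
definition uniform_densities :: "'a::euclidean_space set \<Rightarrow> 'a measure set \<Rightarrow> bool" where
  "uniform_densities K D \<longleftrightarrow>
     (\<forall>mu\<in>D. prob_space mu \<and> sets mu = sets borel \<and> emeasure mu (UNIV - K) = 0) \<and>
     (\<forall>eps>0. \<exists>E :: 'a measure set. \<exists>eta>0.
        (\<forall>nu\<in>E. sets nu = sets borel) \<and>
        (SUP F\<in>{F. finite F \<and> F \<subseteq> E}. \<Sum>nu\<in>F. emeasure nu (space nu)) < \<infinity> \<and>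
        (\<forall>mu\<in>D. \<forall>r. 0 < r \<and> r < eta \<longrightarrow> (\<forall>x\<in>K. \<exists>nu\<in>E.
            ennreal (r powr eps) * emeasure mu (ball x r) \<le> emeasure nu (ball x r))))"

end

theory Submission
  imports Defs
begin

text \<open>Code points by finite words w over I and write S_w, r_w, p_w for the composed map and the
products of ratios and weights along w. By the SSC the cylinders S_w(K) of one generation are
disjoint and even uniformly separated: a ball of radius t < \<delta> r_w around a point of S_w(K) meets
K only inside S_w(K), so it has mass at most p_w. Given t, stop at the longest w with
t < \<delta> r_w; then t^\<epsilon> \<le> \<delta>^\<epsilon> \<kappa>^|w| with \<kappa> = (max r_i)^\<epsilon>, and t \<ge> \<delta> r_w min r_i, so a point
S_wv(x0) with |v| = L fixed lies in the ball. Rounding p up to a grid of mesh 1/N gives a finite set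
of weight vectors q with \<Sum> q_i \<le> s and \<kappa> s < 1; the point masses \<delta>^\<epsilon> \<kappa>^|w| q_w at S_wv(x0)
then have finite total mass \<Sum>_n (\<kappa> s)^n and dominate t^\<epsilon> \<mu>_p(B(x,t)) for every p at once.\<close>

definition word_map :: "('i \<Rightarrow> 'a \<Rightarrow> 'a) \<Rightarrow> 'i list \<Rightarrow> 'a \<Rightarrow> 'a" where
  "word_map S w = foldr (\<lambda>i f. S i \<circ> f) w id"

lemma word_map_Nil [simp]: "word_map S [] = id"
  by (simp add: word_map_def)

lemma word_map_Cons [simp]: "word_map S (i # w) = S i \<circ> word_map S w"
  by (simp add: word_map_def)

lemma word_map_append: "word_map S (w @ v) = word_map S w \<circ> word_map S v"
  by (induction w) auto

definition word_prod :: "('i \<Rightarrow> real) \<Rightarrow> 'i list \<Rightarrow> real" where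
  "word_prod f w = prod_list (map f w)"

lemma word_prod_Nil [simp]: "word_prod f [] = 1"
  by (simp add: word_prod_def)

lemma word_prod_Cons [simp]: "word_prod f (i # w) = f i * word_prod f w"
  by (simp add: word_prod_def)

lemma word_prod_append: "word_prod f (w @ v) = word_prod f w * word_prod f v"
  by (simp add: word_prod_def)

lemma word_prod_const: "word_prod (\<lambda>_. c) w = c ^ length w"
  by (induction w) auto

lemma word_prod_nonneg: "(\<And>i. i \<in> set w \<Longrightarrow> 0 \<le> f i) \<Longrightarrow> 0 \<le> word_prod f w"
  by (induction w) auto

lemma word_prod_pos: "(\<And>i. i \<in> set w \<Longrightarrow> 0 < f i) \<Longrightarrow> 0 < word_prod f w"
  by (induction w) auto

lemma word_prod_mono:
  "(\<And>i. i \<in> set w \<Longrightarrow> 0 \<le> f i \<and> f i \<le> g i) \<Longrightarrow> word_prod f w \<le> word_prod g w"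
proof (induction w)
  case (Cons a w)
  have "0 \<le> word_prod f w" by (rule word_prod_nonneg) (use Cons.prems in auto)
  moreover have "0 \<le> g a" using Cons.prems[of a] by force
  ultimately show ?case using Cons by (auto intro!: mult_mono)
qed simp

lemma word_prod_le_power:
  "(\<And>i. i \<in> set w \<Longrightarrow> 0 \<le> f i \<and> f i \<le> c) \<Longrightarrow> word_prod f w \<le> c ^ length w"
  using word_prod_mono[of w f "\<lambda>_. c"] by (simp add: word_prod_const)

lemma sum_word_prod_length_eq:
  assumes "finite A"
  shows "(\<Sum>w\<in>{w. set w \<subseteq> A \<and> length w = n}. word_prod q w) = (\<Sum>i\<in>A. q i) ^ n"
proof (induction n)
  case 0
  have "{w. set w \<subseteq> A \<and> length w = 0} = {[]}" by auto
  then show ?case by simp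
next
  case (Suc n)
  let ?W = "{w. set w \<subseteq> A \<and> length w = n}"
  have inj: "inj_on (\<lambda>(w, i). i # w) (?W \<times> A)"
    by (auto simp: inj_on_def)
  have "(\<Sum>w\<in>{w. set w \<subseteq> A \<and> length w = Suc n}. word_prod q w)
      = (\<Sum>(w, i)\<in>?W \<times> A. q i * word_prod q w)"
    unfolding lists_length_Suc_eq by (subst sum.reindex[OF inj]) (simp add: case_prod_unfold)
  also have "\<dots> = (\<Sum>w\<in>?W. word_prod q w) * (\<Sum>i\<in>A. q i)"
    by (simp add: sum.cartesian_product[symmetric] sum_distrib_left sum_distrib_right mult.commute)
  finally show ?case using Suc by simp
qed

lemma sum_geometric_word_prod_le:
  assumes "finite I" and "0 \<le> \<kappa>" and "\<And>i. i \<in> I \<Longrightarrow> 0 \<le> q i"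
    and "sum q I \<le> s" and "\<kappa> * s < 1"
  shows "(\<Sum>w\<in>{w. set w \<subseteq> I \<and> length w \<le> M}. \<kappa> ^ length w * word_prod q w) \<le> 1 / (1 - \<kappa> * s)"
proof -
  define W where "W n = {w. set w \<subseteq> I \<and> length w = n}" for n
  have "finite (W n)" for n
    unfolding W_def using assms(1) by (rule finite_lists_length_eq)
  have ks: "0 \<le> \<kappa> * s"
    using assms(2-4) sum_nonneg[of I q] by simp
  have cover: "{w. set w \<subseteq> I \<and> length w \<le> M} = (\<Union>n\<in>{..M}. W n)"
    by (auto simp: W_def)
  have "(\<Sum>w\<in>{w. set w \<subseteq> I \<and> length w \<le> M}. \<kappa> ^ length w * word_prod q w)
      = (\<Sum>n\<le>M. \<Sum>w\<in>W n. \<kappa> ^ length w * word_prod q w)"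
    unfolding cover by (rule sum.UNION_disjoint) (use \<open>\<And>n. finite (W n)\<close> in \<open>auto simp: W_def\<close>)
  also have "\<dots> = (\<Sum>n\<le>M. \<Sum>w\<in>W n. \<kappa> ^ n * word_prod q w)"
    by (auto intro!: sum.cong simp: W_def)
  also have "\<dots> = (\<Sum>n\<le>M. (\<kappa> * sum q I) ^ n)"
    by (simp add: W_def sum_distrib_left[symmetric] sum_word_prod_length_eq assms(1) power_mult_distrib)
  also have "\<dots> \<le> (\<Sum>n<Suc M. (\<kappa> * s) ^ n)"
    unfolding lessThan_Suc_atMost using assms(2-4) sum_nonneg[of I q]
    by (intro sum_mono power_mono mult_left_mono) auto
  also have "\<dots> \<le> (\<Sum>n. (\<kappa> * s) ^ n)"
    using ks assms(5) by (intro sum_le_suminf summable_geometric) auto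
  also have "\<dots> = 1 / (1 - \<kappa> * s)"
    using ks assms(5) by (subst suminf_geometric) auto
  finally show ?thesis .
qed

text \<open>Probability vectors rounded up to multiples of 1/N: a finite set of weight vectors that
dominates every probability vector coordinatewise.\<close>
definition grid_weights :: "nat \<Rightarrow> 'i set \<Rightarrow> ('i \<Rightarrow> real) set" where
  "grid_weights N I =
     {q \<in> I \<rightarrow>\<^sub>E (\<lambda>k. real k / real N) ` {..N}. sum q I \<le> 1 + real (card I) / real N}"

lemma finite_grid_weights: "finite I \<Longrightarrow> finite (grid_weights N I)"
  unfolding grid_weights_def
  by (rule finite_subset[OF _ finite_PiE[of I "\<lambda>_. (\<lambda>k. real k / real N) ` {..N}"]]) auto

lemma grid_weights_nonneg: "q \<in> grid_weights N I \<Longrightarrow> i \<in> I \<Longrightarrow> 0 \<le> q i"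
  by (auto simp: grid_weights_def PiE_def Pi_def)

lemma prob_vector_le_grid_weights:
  assumes "finite I" and "0 < N" and p: "p \<in> prob_vectors I"
  obtains q where "q \<in> grid_weights N I" and "\<And>i. i \<in> I \<Longrightarrow> p i \<le> q i"
proof
  define q where "q = restrict (\<lambda>i. real (nat \<lceil>p i * real N\<rceil>) / real N) I"
  have p01: "0 \<le> p i \<and> p i \<le> 1" if "i \<in> I" for i
    using p member_le_sum[of i I p] assms(1) that by (auto simp: prob_vectors_def)
  have q_bounds: "p i \<le> q i \<and> q i \<le> p i + 1 / real N \<and> nat \<lceil>p i * real N\<rceil> \<le> N"
    if "i \<in> I" for i
  proof -
    have "0 \<le> p i * real N" "p i * real N \<le> real N"
      using p01[OF that] mult_right_mono[of "p i" 1 "real N"] by auto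
    then show ?thesis
      using that assms(2) le_of_int_ceiling[of "p i * real N"]
        of_int_ceiling_le_add_one[of "p i * real N"]
      by (auto simp: q_def field_simps ceiling_le_iff nat_le_iff)
  qed
  have "sum q I \<le> (\<Sum>i\<in>I. p i + 1 / real N)"
    using q_bounds by (intro sum_mono) auto
  also have "\<dots> = 1 + real (card I) / real N"
    using p by (simp add: sum.distrib prob_vectors_def)
  finally show "q \<in> grid_weights N I"
    using q_bounds by (auto simp: grid_weights_def q_def)
  show "p i \<le> q i" if "i \<in> I" for i
    using q_bounds[OF that] by simp
qed

lemma ex_mesh_ratio_less_1:
  fixes \<kappa> c :: real
  assumes "0 \<le> \<kappa>" "\<kappa> < 1" "0 \<le> c"
  obtains N :: nat where "0 < N" "\<kappa> * (1 + c / real N) < 1"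
proof -
  obtain N :: nat where N: "c * \<kappa> / (1 - \<kappa>) < real N"
    using reals_Archimedean2 by blast
  moreover have "0 \<le> c * \<kappa> / (1 - \<kappa>)"
    using assms by simp
  ultimately have "0 < N" by linarith
  moreover have "\<kappa> * (c / real N) < 1 - \<kappa>"
    using N assms(2) \<open>0 < N\<close> by (simp add: field_simps)
  ultimately show ?thesis using that by (simp add: algebra_simps)
qed

lemma sum_weighted_words_le:
  assumes "finite I" "finite Q" "finite V" and "0 \<le> C" "0 \<le> \<kappa>" "\<kappa> * s < 1"
    and Q: "\<And>q i. q \<in> Q \<Longrightarrow> i \<in> I \<Longrightarrow> 0 \<le> q i" "\<And>q. q \<in> Q \<Longrightarrow> sum q I \<le> s"
    and T: "T \<subseteq> Q \<times> {w. set w \<subseteq> I} \<times> V" "finite T"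
  shows "(\<Sum>(q, w, v)\<in>T. C * \<kappa> ^ length w * word_prod q w)
           \<le> real (card Q) * (real (card V) * (C * (1 / (1 - \<kappa> * s))))"
proof -
  define M where "M = Max (insert 0 ((\<lambda>(q, w, v). length w) ` T))"
  define W where "W = {w. set w \<subseteq> I \<and> length w \<le> M}"
  have "finite W"
    unfolding W_def using assms(1) by (rule finite_lists_length_le)
  have "T \<subseteq> Q \<times> W \<times> V"
  proof
    fix t assume "t \<in> T"
    moreover from this have "length (fst (snd t)) \<le> M"
      unfolding M_def using T(2) by (intro Max_ge) (auto simp: case_prod_unfold)
    ultimately show "t \<in> Q \<times> W \<times> V" using T(1) by (auto simp: W_def)
  qed
  moreover have "0 \<le> C * \<kappa> ^ length w * word_prod q w" if "q \<in> Q" "w \<in> W" for q w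
  proof -
    have "0 \<le> word_prod q w"
      using that Q(1) by (intro word_prod_nonneg) (auto simp: W_def)
    then show ?thesis using assms(4,5) by simp
  qed
  ultimately have "(\<Sum>(q, w, v)\<in>T. C * \<kappa> ^ length w * word_prod q w)
      \<le> (\<Sum>(q, w, v)\<in>Q \<times> W \<times> V. C * \<kappa> ^ length w * word_prod q w)"
    using assms(2,3) \<open>finite W\<close> by (intro sum_mono2) auto
  also have "\<dots> = (\<Sum>q\<in>Q. real (card V) * (C * (\<Sum>w\<in>W. \<kappa> ^ length w * word_prod q w)))"
    by (simp add: sum.cartesian_product[symmetric] sum_distrib_left mult.assoc)
  also have "\<dots> \<le> (\<Sum>q\<in>Q. real (card V) * (C * (1 / (1 - \<kappa> * s))))"
  proof (intro sum_mono mult_left_mono)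
    fix q assume "q \<in> Q"
    show "(\<Sum>w\<in>W. \<kappa> ^ length w * word_prod q w) \<le> 1 / (1 - \<kappa> * s)"
      unfolding W_def using assms(1,5) Q[OF \<open>q \<in> Q\<close>] assms(6) by (rule sum_geometric_word_prod_le)
  qed (use assms(4) in auto)
  finally show ?thesis by simp
qed

lemma SUP_sum_finite_masses_le:
  assumes "\<And>t. t \<in> T \<Longrightarrow> emeasure (\<nu> t) (space (\<nu> t)) = ennreal (c t)"
    and "\<And>t. t \<in> T \<Longrightarrow> 0 \<le> c t"
    and "\<And>T'. T' \<subseteq> T \<Longrightarrow> finite T' \<Longrightarrow> (\<Sum>t\<in>T'. c t) \<le> B"
  shows "(SUP F\<in>{F. finite F \<and> F \<subseteq> \<nu> ` T}. \<Sum>m\<in>F. emeasure m (space m)) \<le> ennreal B"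
proof (rule SUP_least)
  fix F assume "F \<in> {F. finite F \<and> F \<subseteq> \<nu> ` T}"
  then obtain T' where T': "T' \<subseteq> T" "finite T'" "F = \<nu> ` T'"
    using finite_subset_image[of F \<nu> T] by blast
  have "(\<Sum>m\<in>F. emeasure m (space m)) \<le> (\<Sum>t\<in>T'. emeasure (\<nu> t) (space (\<nu> t)))"
    unfolding T'(3) using sum_image_le[OF T'(2), of "\<lambda>m. emeasure m (space m)" \<nu>]
    by (simp add: o_def)
  also have "\<dots> = (\<Sum>t\<in>T'. ennreal (c t))"
    using assms(1) T'(1) by (intro sum.cong) auto
  also have "\<dots> = ennreal (\<Sum>t\<in>T'. c t)"
    using assms(2) T'(1) by (intro sum_ennreal) auto
  also have "\<dots> \<le> ennreal B"
    using assms(3)[OF T'(1,2)] by (rule ennreal_leI)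
  finally show "(\<Sum>m\<in>F. emeasure m (space m)) \<le> ennreal B" .
qed

locale ssc_ifs =
  fixes I :: "'i set" and S :: "'i \<Rightarrow> 'a::euclidean_space \<Rightarrow> 'a" and r :: "'i \<Rightarrow> real"
    and K :: "'a set"
  assumes finite_I: "finite I" and I_nonempty: "I \<noteq> {}"
    and similarity: "\<And>i. i \<in> I \<Longrightarrow> contracting_similarity (S i) (r i)"
    and compact_K: "compact K" and K_nonempty: "K \<noteq> {}" and K_invariant: "K = (\<Union>i\<in>I. S i ` K)"
    and ssc: "\<And>i j. i \<in> I \<Longrightarrow> j \<in> I \<Longrightarrow> i \<noteq> j \<Longrightarrow> S i ` K \<inter> S j ` K = {}"
begin

lemma ratio_pos: "i \<in> I \<Longrightarrow> 0 < r i"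
  and ratio_less_1: "i \<in> I \<Longrightarrow> r i < 1"
  and dist_S: "i \<in> I \<Longrightarrow> dist (S i x) (S i y) = r i * dist x y"
  using similarity unfolding contracting_similarity_def by auto

lemma inj_S: "i \<in> I \<Longrightarrow> inj (S i)"
  by (rule injI) (metis dist_S dist_eq_0_iff mult_eq_0_iff ratio_pos less_irrefl)

lemma closed_K: "closed K"
  using compact_K by (rule compact_imp_closed)

lemma S_image_subset: "i \<in> I \<Longrightarrow> S i ` K \<subseteq> K"
  using K_invariant by blast

definition rmax :: real where "rmax = Max (r ` I)"

definition rmin :: real where "rmin = Min (r ` I)"

lemma rmax: "0 < rmax" "rmax < 1" "\<And>i. i \<in> I \<Longrightarrow> r i \<le> rmax"
proof -
  have "rmax \<in> r ` I" unfolding rmax_def using finite_I I_nonempty by (intro Max_in) auto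
  then show "0 < rmax" "rmax < 1" using ratio_pos ratio_less_1 by auto
  show "\<And>i. i \<in> I \<Longrightarrow> r i \<le> rmax" unfolding rmax_def using finite_I by auto
qed

lemma rmin: "0 < rmin" "\<And>i. i \<in> I \<Longrightarrow> rmin \<le> r i"
proof -
  have "rmin \<in> r ` I" unfolding rmin_def using finite_I I_nonempty by (intro Min_in) auto
  then show "0 < rmin" using ratio_pos by auto
  show "\<And>i. i \<in> I \<Longrightarrow> rmin \<le> r i" unfolding rmin_def using finite_I by auto
qed

lemma dist_word_map:
  "set w \<subseteq> I \<Longrightarrow> dist (word_map S w x) (word_map S w y) = word_prod r w * dist x y"
  by (induction w) (auto simp: dist_S)

lemma word_prod_ratio_pos: "set w \<subseteq> I \<Longrightarrow> 0 < word_prod r w"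
  using word_prod_pos[of w r] ratio_pos by blast

lemma word_prod_ratio_le_rmax_power: "set w \<subseteq> I \<Longrightarrow> word_prod r w \<le> rmax ^ length w"
  using ratio_pos rmax(3) by (intro word_prod_le_power) (force intro: less_imp_le)

lemma word_prod_ratio_le_1: "set w \<subseteq> I \<Longrightarrow> word_prod r w \<le> 1"
  using word_prod_ratio_le_rmax_power[of w] rmax power_le_one[of rmax "length w"] by linarith

definition cylinder :: "'i list \<Rightarrow> 'a set" where
  "cylinder w = word_map S w ` K"

lemma cylinder_Cons: "cylinder (i # w) = S i ` cylinder w"
  by (simp add: cylinder_def image_comp)

lemma cylinder_subset: "set w \<subseteq> I \<Longrightarrow> cylinder w \<subseteq> K"
proof (induction w)
  case (Cons i w)
  then show ?case using S_image_subset by (auto simp: cylinder_Cons)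
qed (simp add: cylinder_def)

lemma compact_cylinder:
  assumes "set w \<subseteq> I" shows "compact (cylinder w)"
proof -
  have "(word_prod r w)-lipschitz_on K (word_map S w)"
  proof (rule lipschitz_onI)
    show "dist (word_map S w x) (word_map S w y) \<le> word_prod r w * dist x y" for x y
      using dist_word_map[OF assms] by simp
    show "0 \<le> word_prod r w"
      using word_prod_ratio_pos[OF assms] by simp
  qed
  then have "continuous_on K (word_map S w)"
    by (rule lipschitz_on_continuous_on)
  then show ?thesis
    unfolding cylinder_def using compact_K by (rule compact_continuous_image)
qed

lemma cylinder_snoc_cover:
  assumes "set w \<subseteq> I" "x \<in> cylinder w"
  obtains i where "i \<in> I" "x \<in> cylinder (w @ [i])"
proof -
  obtain a where a: "a \<in> K" "x = word_map S w a" using assms by (auto simp: cylinder_def)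
  then obtain i b where "i \<in> I" "b \<in> K" "a = S i b" using K_invariant by blast
  moreover from this have "x \<in> cylinder (w @ [i])"
    using a by (auto simp: cylinder_def word_map_append)
  ultimately show ?thesis using that by blast
qed

lemma cylinder_extend:
  assumes "set w \<subseteq> I" "x \<in> cylinder w"
  obtains v where "set v \<subseteq> I" "length v = L" "x \<in> cylinder (w @ v)"
proof -
  have "\<exists>v. set v \<subseteq> I \<and> length v = L \<and> x \<in> cylinder (w @ v)"
  proof (induction L)
    case 0 then show ?case using assms by auto
  next
    case (Suc L)
    then obtain v where v: "set v \<subseteq> I" "length v = L" "x \<in> cylinder (w @ v)" by blast
    moreover obtain i where "i \<in> I" "x \<in> cylinder (w @ v @ [i])"
      using cylinder_snoc_cover[of "w @ v" x] v assms(1) by auto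
    ultimately show ?case by (intro exI[of _ "v @ [i]"]) auto
  qed
  then show ?thesis using that by blast
qed

definition separated_by :: "real \<Rightarrow> bool" where
  "separated_by \<delta> \<longleftrightarrow> 0 < \<delta> \<and>
     (\<forall>i\<in>I. \<forall>j\<in>I. i \<noteq> j \<longrightarrow> (\<forall>a\<in>K. \<forall>b\<in>K. \<delta> \<le> dist (S i a) (S j b)))"

lemma ex_separated_by: "\<exists>\<delta>. separated_by \<delta>"
proof -
  let ?D = "{setdist (cylinder [i]) (cylinder [j]) | i j. i \<in> I \<and> j \<in> I \<and> i \<noteq> j}"
  have "?D \<subseteq> (\<lambda>(i, j). setdist (cylinder [i]) (cylinder [j])) ` (I \<times> I)"
    by auto
  then have "finite ?D"
    by (rule finite_subset) (simp add: finite_I)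
  have "0 < d" if "d \<in> ?D" for d
  proof -
    obtain i j where ij: "i \<in> I" "j \<in> I" "i \<noteq> j"
      and d: "d = setdist (cylinder [i]) (cylinder [j])" using \<open>d \<in> ?D\<close> by blast
    have "cylinder [i] \<inter> cylinder [j] = {}" "cylinder [i] \<noteq> {}" "cylinder [j] \<noteq> {}"
      using ssc[OF ij] K_nonempty by (auto simp: cylinder_def)
    then have "d \<noteq> 0"
      unfolding d using ij setdist_eq_0_compact_closed[OF compact_cylinder[of "[i]"]
        compact_imp_closed[OF compact_cylinder[of "[j]"]]] by simp
    then show ?thesis using setdist_pos_le[of "cylinder [i]" "cylinder [j]"] d by linarith
  qed
  define \<delta> where "\<delta> = Min (insert 1 ?D)"
  have "0 < \<delta>"
    unfolding \<delta>_def using \<open>finite ?D\<close> \<open>\<And>d. d \<in> ?D \<Longrightarrow> 0 < d\<close> by (subst Min_gr_iff) auto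
  moreover have "\<delta> \<le> dist (S i a) (S j b)" if "i \<in> I" "j \<in> I" "i \<noteq> j" "a \<in> K" "b \<in> K" for i j a b
  proof -
    have "\<delta> \<le> setdist (cylinder [i]) (cylinder [j])"
      unfolding \<delta>_def using \<open>finite ?D\<close> that by (intro Min_le) auto
    also have "\<dots> \<le> dist (S i a) (S j b)"
      using that by (intro setdist_le_dist) (auto simp: cylinder_def)
    finally show ?thesis .
  qed
  ultimately show ?thesis unfolding separated_by_def by blast
qed

text \<open>A point of K within \<delta> r_w of the cylinder S_w(K) lies in that cylinder: at the first
letter where the codings differ the two points would be \<delta> r_u-separated for a prefix u of w.\<close>
lemma near_cylinder_in_cylinder:
  assumes "separated_by \<delta>"
  shows "set w \<subseteq> I \<Longrightarrow> x \<in> cylinder w \<Longrightarrow> y \<in> K \<Longrightarrow> dist x y < \<delta> * word_prod r w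
    \<Longrightarrow> y \<in> cylinder w"
proof (induction w arbitrary: x y)
  case Nil then show ?case by (simp add: cylinder_def)
next
  case (Cons i w)
  have i: "i \<in> I" and w: "set w \<subseteq> I" using Cons.prems by auto
  obtain x' where x': "x' \<in> cylinder w" "x = S i x'" using Cons.prems by (auto simp: cylinder_Cons)
  obtain j y' where y': "j \<in> I" "y' \<in> K" "y = S j y'" using Cons.prems(3) K_invariant by blast
  show ?case
  proof (cases "j = i")
    case False
    have "\<delta> \<le> dist x y"
      using assms i y' x' cylinder_subset[OF w] False by (auto simp: separated_by_def)
    moreover have "\<delta> * word_prod r (i # w) \<le> \<delta>"
      using word_prod_ratio_le_1[of "i # w"] Cons.prems assms
      by (simp add: separated_by_def mult_le_cancel_left1)
    ultimately show ?thesis using Cons.prems(4) by linarith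
  next
    case True
    have "r i * dist x' y' < r i * (\<delta> * word_prod r w)"
      using Cons.prems(4) x' y' True dist_S[OF i] by (simp add: mult.left_commute)
    then have "dist x' y' < \<delta> * word_prod r w" using ratio_pos[OF i] by simp
    then show ?thesis using Cons.IH[OF w x'(1) y'(2)] y' True by (simp add: cylinder_Cons)
  qed
qed

lemma ex_stopping_word:
  assumes "separated_by \<delta>" "x \<in> K" "0 < t" "t < \<delta>"
  obtains w where "set w \<subseteq> I" "x \<in> cylinder w" "t < \<delta> * word_prod r w"
    "\<delta> * word_prod r w * rmin \<le> t"
proof -
  define P where "P w \<longleftrightarrow> set w \<subseteq> I \<and> x \<in> cylinder w \<and> t < \<delta> * word_prod r w" for w
  have "0 < \<delta>" using assms(1) by (simp add: separated_by_def)
  obtain b where b: "rmax ^ b < t / \<delta>"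
    using real_arch_pow_inv[of "t / \<delta>" rmax] assms(3) \<open>0 < \<delta>\<close> rmax by auto
  have "length w < b" if "P w" for w
  proof (rule ccontr)
    assume "\<not> length w < b"
    then have "rmax ^ length w \<le> rmax ^ b"
      using rmax by (intro power_decreasing) auto
    moreover have "word_prod r w \<le> rmax ^ length w"
      using that word_prod_ratio_le_rmax_power by (simp add: P_def)
    ultimately have "word_prod r w * \<delta> \<le> rmax ^ b * \<delta>"
      using \<open>0 < \<delta>\<close> by (intro mult_right_mono) auto
    moreover have "rmax ^ b * \<delta> < t"
      using b \<open>0 < \<delta>\<close> by (simp add: less_divide_eq)
    ultimately show False using that by (simp add: P_def mult.commute)
  qed
  moreover have "P []" using assms by (simp add: P_def cylinder_def)
  ultimately have "\<exists>w. P w \<and> (\<forall>w'. P w' \<longrightarrow> length w' \<le> length w)"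
    by (intro ex_has_greatest_nat[of P "[]" length b]) auto
  then obtain w where w: "P w" and longest: "\<And>w'. P w' \<Longrightarrow> length w' \<le> length w"
    by blast
  then have wI: "set w \<subseteq> I" and x: "x \<in> cylinder w" and t: "t < \<delta> * word_prod r w"
    by (simp_all add: P_def)
  obtain i where i: "i \<in> I" "x \<in> cylinder (w @ [i])"
    using cylinder_snoc_cover[OF wI x] .
  have "\<not> P (w @ [i])"
    using longest[of "w @ [i]"] by auto
  then have "\<delta> * word_prod r w * r i \<le> t"
    using i wI by (simp add: P_def word_prod_append mult.assoc)
  moreover have "\<delta> * word_prod r w * rmin \<le> \<delta> * word_prod r w * r i"
    using rmin(2)[OF i(1)] word_prod_ratio_pos[OF wI] \<open>0 < \<delta>\<close> by simp
  ultimately have "\<delta> * word_prod r w * rmin \<le> t"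
    by linarith
  with wI x t show ?thesis by (rule that)
qed

lemma ex_word_point_near:
  assumes "set w \<subseteq> I" "x \<in> cylinder w" "x0 \<in> K"
  obtains v where "set v \<subseteq> I" "length v = L"
    "dist x (word_map S (w @ v) x0) \<le> word_prod r w * (rmax ^ L * diameter K)"
proof -
  obtain v where v: "set v \<subseteq> I" "length v = L" "x \<in> cylinder (w @ v)"
    using cylinder_extend[OF assms(1,2)] .
  obtain a where a: "a \<in> K" "x = word_map S (w @ v) a"
    using v(3) by (auto simp: cylinder_def)
  have "dist a x0 \<le> diameter K"
    using diameter_bounded_bound[OF compact_imp_bounded[OF compact_K] a(1) assms(3)] .
  then have "word_prod r v * dist a x0 \<le> rmax ^ L * diameter K"
    using word_prod_ratio_le_rmax_power[OF v(1)] v(2) rmax(1) by (intro mult_mono) auto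
  then have "word_prod r w * (word_prod r v * dist a x0) \<le> word_prod r w * (rmax ^ L * diameter K)"
    using word_prod_ratio_pos[OF assms(1)] by (intro mult_left_mono) auto
  moreover have "dist x (word_map S (w @ v) x0) = word_prod r w * (word_prod r v * dist a x0)"
    using a assms(1) v(1) by (simp add: dist_word_map word_prod_append mult.assoc)
  ultimately show ?thesis using v(1,2) that by simp
qed

lemma powr_le_word_bound:
  assumes "set w \<subseteq> I" "0 < t" "t \<le> \<delta> * word_prod r w" "0 \<le> \<epsilon>"
  shows "t powr \<epsilon> \<le> \<delta> powr \<epsilon> * (rmax powr \<epsilon>) ^ length w"
proof -
  have "0 < \<delta> * word_prod r w"
    using assms(2,3) by linarith
  then have "0 < \<delta>"
    using word_prod_ratio_pos[OF assms(1)] by (simp add: zero_less_mult_iff)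
  then have "\<delta> * word_prod r w \<le> \<delta> * rmax ^ length w"
    using word_prod_ratio_le_rmax_power[OF assms(1)] by simp
  then have "t powr \<epsilon> \<le> (\<delta> * rmax ^ length w) powr \<epsilon>"
    using assms(2,3,4) by (intro powr_mono2) auto
  also have "\<dots> = \<delta> powr \<epsilon> * (rmax powr real (length w)) powr \<epsilon>"
    using \<open>0 < \<delta>\<close> rmax(1) by (simp add: powr_mult powr_realpow)
  also have "\<dots> = \<delta> powr \<epsilon> * (rmax powr \<epsilon>) ^ length w"
    using rmax(1) by (simp add: powr_powr powr_power mult.commute)
  finally show ?thesis .
qed

lemma ex_rmax_power_diameter_less:
  assumes "0 < c" obtains L where "rmax ^ L * diameter K < c"
proof -
  have diam: "0 \<le> diameter K"
    using compact_imp_bounded[OF compact_K] by (rule diameter_ge_0)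
  obtain L where L: "rmax ^ L < c / (diameter K + 1)"
    using real_arch_pow_inv[of "c / (diameter K + 1)" rmax] assms rmax diam by auto
  have "rmax ^ L * diameter K \<le> rmax ^ L * (diameter K + 1)"
    using rmax(1) by simp
  also have "\<dots> < c"
    using L diam by (simp add: less_divide_eq)
  finally show ?thesis by (rule that)
qed

definition point_mass :: "real \<Rightarrow> real \<Rightarrow> 'a \<Rightarrow> ('i \<Rightarrow> real) \<times> 'i list \<times> 'i list \<Rightarrow> 'a measure"
  where "point_mass C \<kappa> x0 = (\<lambda>(q, w, v).
    scale_measure (ennreal (C * \<kappa> ^ length w * word_prod q w)) (return borel (word_map S (w @ v) x0)))"

lemma sets_point_mass [simp]: "sets (point_mass C \<kappa> x0 t) = sets borel"
  by (simp add: point_mass_def split: prod.split)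

lemma emeasure_point_mass_ball:
  "dist x (word_map S (w @ v) x0) < t
    \<Longrightarrow> emeasure (point_mass C \<kappa> x0 (q, w, v)) (ball x t) = ennreal (C * \<kappa> ^ length w * word_prod q w)"
  by (simp add: point_mass_def dist_commute)

lemma SUP_sum_point_mass_finite:
  fixes L :: nat
  assumes "0 \<le> C" "0 \<le> \<kappa>" and \<kappa>_s: "\<kappa> * (1 + real (card I) / real N) < 1"
  defines "T \<equiv> grid_weights N I \<times> {w. set w \<subseteq> I} \<times> {v. set v \<subseteq> I \<and> length v = L}"
  shows "(SUP F\<in>{F. finite F \<and> F \<subseteq> point_mass C \<kappa> x0 ` T}. \<Sum>m\<in>F. emeasure m (space m)) < \<infinity>"
proof -
  let ?Q = "grid_weights N I" and ?V = "{v. set v \<subseteq> I \<and> length v = L}"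
  let ?wt = "\<lambda>(q, w, v :: 'i list). C * \<kappa> ^ length w * word_prod q w"
  have "finite ?Q" "finite ?V"
    using finite_I by (simp_all add: finite_grid_weights finite_lists_length_eq)
  have Q_sum: "sum q I \<le> 1 + real (card I) / real N" if "q \<in> ?Q" for q
    using that by (simp add: grid_weights_def)
  have "(SUP F\<in>{F. finite F \<and> F \<subseteq> point_mass C \<kappa> x0 ` T}. \<Sum>m\<in>F. emeasure m (space m))
      \<le> ennreal (real (card ?Q) * (real (card ?V) * (C * (1 / (1 - \<kappa> * (1 + real (card I) / real N))))))"
  proof (rule SUP_sum_finite_masses_le)
    show "emeasure (point_mass C \<kappa> x0 t) (space (point_mass C \<kappa> x0 t)) = ennreal (?wt t)" for t
      by (simp add: point_mass_def space_scale_measure split: prod.split)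
    show "0 \<le> ?wt t" if "t \<in> T" for t
    proof -
      obtain q w v where t: "t = (q, w, v)" "q \<in> ?Q" "set w \<subseteq> I"
        using \<open>t \<in> T\<close> by (auto simp: T_def)
      have "0 \<le> word_prod q w"
        using t grid_weights_nonneg[of q N I] by (intro word_prod_nonneg) auto
      then show ?thesis using t(1) assms(1,2) by simp
    qed
    show "(\<Sum>t\<in>T'. ?wt t) \<le> real (card ?Q) * (real (card ?V) *
        (C * (1 / (1 - \<kappa> * (1 + real (card I) / real N)))))" if "T' \<subseteq> T" "finite T'" for T'
    proof (rule sum_weighted_words_le[of I ?Q ?V C \<kappa>])
      show "T' \<subseteq> ?Q \<times> {w. set w \<subseteq> I} \<times> ?V" using that(1) by (simp add: T_def)
    qed (use finite_I \<open>finite ?Q\<close> \<open>finite ?V\<close> assms(1,2) \<kappa>_s grid_weights_nonneg Q_sum that(2) in auto)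
  qed
  also have "\<dots> < \<infinity>"
    by simp
  finally show ?thesis .
qed

end

locale ssc_self_similar_measure = ssc_ifs I S r K
  for I :: "'i set" and S :: "'i \<Rightarrow> 'a::euclidean_space \<Rightarrow> 'a" and r K +
  fixes p :: "'i \<Rightarrow> real" and \<mu> :: "'a measure"
  assumes prob_vector: "p \<in> prob_vectors I" and self_similar: "is_self_similar_measure I S p \<mu>"
begin

lemma weight_nonneg: "i \<in> I \<Longrightarrow> 0 \<le> p i" and weight_sum: "(\<Sum>i\<in>I. p i) = 1"
  using prob_vector by (auto simp: prob_vectors_def)

lemma prob_space: "prob_space \<mu>" and sets_eq_borel: "sets \<mu> = sets borel"
  and emeasure_self_similar:
    "\<And>A. A \<in> sets borel \<Longrightarrow> emeasure \<mu> A = (\<Sum>i\<in>I. ennreal (p i) * emeasure \<mu> (S i -` A))"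
  using self_similar by (auto simp: is_self_similar_measure_def)

lemma emeasure_finite: "emeasure \<mu> A \<noteq> \<infinity>"
  using prob_space.emeasure_le_1[OF prob_space, of A] by (auto simp: top_unique)

definition far_from_K :: "real \<Rightarrow> 'a set" where
  "far_from_K t = {y. t < infdist y K}"

lemma far_from_K_sets: "far_from_K t \<in> sets \<mu>"
proof -
  have "open (far_from_K t)" unfolding far_from_K_def
    by (intro open_Collect_less continuous_on_infdist continuous_on_id continuous_on_const)
  then show ?thesis by (simp add: sets_eq_borel)
qed

text \<open>S_i contracts the distance to K by r_i \<le> rmax, since S_i(K) \<subseteq> K.\<close>
lemma emeasure_far_from_K_le: "emeasure \<mu> (far_from_K t) \<le> emeasure \<mu> (far_from_K (t / rmax))"
proof -
  have "S i -` far_from_K t \<subseteq> far_from_K (t / rmax)" if i: "i \<in> I" for i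
  proof
    fix y assume "y \<in> S i -` far_from_K t"
    obtain k where k: "k \<in> K" "infdist y K = dist y k"
      using infdist_attains_inf[OF closed_K K_nonempty] by blast
    have "t < infdist (S i y) K" using \<open>y \<in> S i -` far_from_K t\<close> by (simp add: far_from_K_def)
    also have "\<dots> \<le> dist (S i y) (S i k)"
      using S_image_subset[OF i] k(1) by (intro infdist_le) auto
    also have "\<dots> \<le> rmax * infdist y K"
      using dist_S[OF i] rmax(3)[OF i] k by (simp add: mult_right_mono)
    finally show "y \<in> far_from_K (t / rmax)"
      using rmax(1) by (simp add: far_from_K_def divide_less_eq mult.commute)
  qed
  then have "emeasure \<mu> (far_from_K t) \<le> (\<Sum>i\<in>I. ennreal (p i) * emeasure \<mu> (far_from_K (t / rmax)))"
    using far_from_K_sets sets_eq_borel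
    by (subst emeasure_self_similar) (auto intro!: sum_mono mult_left_mono emeasure_mono)
  also have "\<dots> = emeasure \<mu> (far_from_K (t / rmax))"
    using weight_nonneg weight_sum by (simp add: sum_distrib_right[symmetric] sum_ennreal)
  finally show ?thesis .
qed

lemma emeasure_far_from_K: assumes "0 < t" shows "emeasure \<mu> (far_from_K t) = 0"
proof -
  define A where "A n = far_from_K (t / rmax ^ n)" for n
  have le: "emeasure \<mu> (far_from_K t) \<le> emeasure \<mu> (A n)" for n
  proof (induction n)
    case (Suc n)
    then show ?case
      using emeasure_far_from_K_le[of "t / rmax ^ n"] by (simp add: A_def mult.commute)
  qed (simp add: A_def)
  have "decseq A" unfolding decseq_def A_def far_from_K_def
    using rmax assms
    by (auto intro: order.strict_trans1[OF divide_left_mono[OF power_decreasing]])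
  have "(\<Inter>n. A n) = {}"
  proof (rule equals0I)
    fix y assume "y \<in> (\<Inter>n. A n)"
    then have y: "y \<in> A n" for n by blast
    obtain n where "infdist y K / t < (1 / rmax) ^ n"
      using real_arch_pow[of "1 / rmax"] rmax by auto
    then have "infdist y K < t / rmax ^ n" using assms by (simp add: divide_less_eq power_one_over)
    moreover have "t / rmax ^ n < infdist y K"
      using y by (simp add: A_def far_from_K_def)
    ultimately show False by linarith
  qed
  moreover have "(\<lambda>n. emeasure \<mu> (A n)) \<longlonglongrightarrow> emeasure \<mu> (\<Inter>n. A n)"
    by (rule Lim_emeasure_decseq[OF _ \<open>decseq A\<close> emeasure_finite]) (auto simp: A_def far_from_K_sets)
  ultimately have "(\<lambda>n. emeasure \<mu> (A n)) \<longlonglongrightarrow> 0"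
    by simp
  then have "emeasure \<mu> (far_from_K t) \<le> 0"
    using le by (intro LIMSEQ_le_const) auto
  then show ?thesis by simp
qed

lemma emeasure_compl_K: "emeasure \<mu> (UNIV - K) = 0"
proof -
  have "UNIV - K = (\<Union>n. far_from_K (inverse (real (Suc n))))"
  proof safe
    fix y assume "y \<notin> K"
    then have "0 < infdist y K" using infdist_pos_not_in_closed[OF closed_K K_nonempty] by auto
    then obtain n where "inverse (real (Suc n)) < infdist y K" using reals_Archimedean by blast
    then show "y \<in> (\<Union>n. far_from_K (inverse (real (Suc n))))" unfolding far_from_K_def by blast
  next
    fix y n assume "y \<in> far_from_K (inverse (real (Suc n)))" "y \<in> K"
    then show False by (simp add: far_from_K_def)
  qed simp
  then have "emeasure \<mu> (UNIV - K) \<le> (\<Sum>n. emeasure \<mu> (far_from_K (inverse (real (Suc n)))))"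
    by (simp add: emeasure_subadditive_countably far_from_K_sets image_subset_iff)
  then show ?thesis by (simp add: emeasure_far_from_K)
qed

lemma cylinder_sets: "set w \<subseteq> I \<Longrightarrow> cylinder w \<in> sets \<mu>"
  using compact_cylinder by (auto simp: sets_eq_borel intro: borel_closed compact_imp_closed)

lemma compl_K_sets: "UNIV - K \<in> sets \<mu>"
  using closed_K by (simp add: sets_eq_borel borel_open open_Diff)

lemma emeasure_S_vimage_other:
  assumes "i \<in> I" "j \<in> I" "i \<noteq> j" "A \<subseteq> K"
  shows "emeasure \<mu> (S j -` S i ` A) = 0"
proof -
  have "S j -` S i ` A \<subseteq> UNIV - K"
    using ssc[OF assms(1-3)] assms(4) by blast
  then show ?thesis
    using emeasure_compl_K emeasure_mono[OF _ compl_K_sets] by (metis le_zero_eq)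
qed

lemma emeasure_cylinder_le: "set w \<subseteq> I \<Longrightarrow> emeasure \<mu> (cylinder w) \<le> ennreal (word_prod p w)"
proof (induction w)
  case Nil
  then show ?case using prob_space.emeasure_le_1[OF prob_space] by simp
next
  case (Cons i w)
  have i: "i \<in> I" and w: "set w \<subseteq> I" using Cons.prems by auto
  have "cylinder (i # w) \<in> sets borel" using cylinder_sets[OF Cons.prems] by (simp add: sets_eq_borel)
  then have "emeasure \<mu> (cylinder (i # w))
      = (\<Sum>j\<in>I. ennreal (p j) * emeasure \<mu> (S j -` S i ` cylinder w))"
    by (simp add: emeasure_self_similar cylinder_Cons)
  also have "\<dots> = ennreal (p i) * emeasure \<mu> (S i -` S i ` cylinder w)"
    using finite_I i emeasure_S_vimage_other[OF i _ _ cylinder_subset[OF w]]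
    by (subst sum.remove[of _ i]) (auto intro!: sum.neutral)
  also have "\<dots> \<le> ennreal (p i) * ennreal (word_prod p w)"
    using Cons.IH[OF w] by (simp add: inj_vimage_image_eq[OF inj_S[OF i]] mult_left_mono)
  also have "\<dots> = ennreal (word_prod p (i # w))"
    using weight_nonneg[OF i] word_prod_nonneg[of w p] weight_nonneg w
    by (simp add: ennreal_mult subset_iff)
  finally show ?case .
qed

lemma emeasure_ball_le_word_prod:
  assumes "separated_by \<delta>" "set w \<subseteq> I" "x \<in> cylinder w" "t \<le> \<delta> * word_prod r w"
  shows "emeasure \<mu> (ball x t) \<le> ennreal (word_prod p w)"
proof -
  have "ball x t \<subseteq> cylinder w \<union> (UNIV - K)"
    using near_cylinder_in_cylinder[OF assms(1,2,3)] assms(4) by (auto simp: dist_commute)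
  then have "emeasure \<mu> (ball x t) \<le> emeasure \<mu> (cylinder w \<union> (UNIV - K))"
    using cylinder_sets[OF assms(2)] compl_K_sets by (intro emeasure_mono) auto
  also have "\<dots> \<le> emeasure \<mu> (cylinder w) + emeasure \<mu> (UNIV - K)"
    using cylinder_sets[OF assms(2)] compl_K_sets by (rule emeasure_subadditive)
  also have "\<dots> \<le> ennreal (word_prod p w)"
    using emeasure_cylinder_le[OF assms(2)] emeasure_compl_K by simp
  finally show ?thesis .
qed

lemma scaled_emeasure_ball_le:
  assumes "separated_by \<delta>" "x \<in> K" "0 < t" "t < \<delta>" "0 \<le> \<epsilon>" "x0 \<in> K"
    and L: "rmax ^ L * diameter K < \<delta> * rmin" and q: "\<And>i. i \<in> I \<Longrightarrow> p i \<le> q i"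
  obtains w v where "set w \<subseteq> I" "set v \<subseteq> I" "length v = L" "dist x (word_map S (w @ v) x0) < t"
    "ennreal (t powr \<epsilon>) * emeasure \<mu> (ball x t)
       \<le> ennreal (\<delta> powr \<epsilon> * (rmax powr \<epsilon>) ^ length w * word_prod q w)"
proof -
  obtain w where w: "set w \<subseteq> I" "x \<in> cylinder w" "t < \<delta> * word_prod r w"
    and t_ge: "\<delta> * word_prod r w * rmin \<le> t"
    using ex_stopping_word[OF assms(1-4)] .
  obtain v where v: "set v \<subseteq> I" "length v = L"
    and near: "dist x (word_map S (w @ v) x0) \<le> word_prod r w * (rmax ^ L * diameter K)"
    using ex_word_point_near[OF w(1,2) assms(6)] .
  have "word_prod r w * (rmax ^ L * diameter K) < word_prod r w * (\<delta> * rmin)"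
    using L word_prod_ratio_pos[OF w(1)] by simp
  then have "dist x (word_map S (w @ v) x0) < t"
    using near t_ge by (simp add: mult_ac)
  moreover have "word_prod p w \<le> word_prod q w"
    using w(1) q weight_nonneg by (intro word_prod_mono) auto
  then have "ennreal (t powr \<epsilon>) * emeasure \<mu> (ball x t)
      \<le> ennreal (\<delta> powr \<epsilon> * (rmax powr \<epsilon>) ^ length w) * ennreal (word_prod q w)"
    using powr_le_word_bound[OF w(1) assms(3) _ assms(5), of \<delta>] w(3)
      emeasure_ball_le_word_prod[OF assms(1) w(1,2), of t]
    by (intro mult_mono) (auto intro: order.trans ennreal_leI)
  ultimately show ?thesis
    using that w(1) v by (simp add: ennreal_mult')
qed

end

context ssc_ifs
begin

lemma ex_dominating_point_masses:
  assumes M: "\<And>p. p \<in> \<Delta> \<Longrightarrow> ssc_self_similar_measure I S r K p (\<mu> p)"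
    and "0 < \<epsilon>"
  shows "\<exists>E :: 'a measure set. \<exists>\<eta>>0. (\<forall>\<nu>\<in>E. sets \<nu> = sets borel) \<and>
     (SUP F\<in>{F. finite F \<and> F \<subseteq> E}. \<Sum>\<nu>\<in>F. emeasure \<nu> (space \<nu>)) < \<infinity> \<and>
     (\<forall>m\<in>\<mu> ` \<Delta>. \<forall>t. 0 < t \<and> t < \<eta> \<longrightarrow> (\<forall>x\<in>K. \<exists>\<nu>\<in>E.
        ennreal (t powr \<epsilon>) * emeasure m (ball x t) \<le> emeasure \<nu> (ball x t)))"
proof -
  obtain \<delta> where \<delta>: "separated_by \<delta>"
    using ex_separated_by ..
  then have "0 < \<delta>" by (simp add: separated_by_def)
  have "0 < \<delta> * rmin"
    using \<open>0 < \<delta>\<close> rmin(1) by simp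
  then obtain L where L: "rmax ^ L * diameter K < \<delta> * rmin"
    by (rule ex_rmax_power_diameter_less)
  define \<kappa> where "\<kappa> = rmax powr \<epsilon>"
  have "0 < \<kappa>" "\<kappa> < 1"
    using rmax \<open>0 < \<epsilon>\<close> powr_less_mono2[of \<epsilon> rmax 1] by (auto simp: \<kappa>_def)
  then obtain N where "0 < N" and \<kappa>_s: "\<kappa> * (1 + real (card I) / real N) < 1"
    using ex_mesh_ratio_less_1[of \<kappa> "real (card I)"] by auto
  obtain x0 where x0: "x0 \<in> K" using K_nonempty by blast
  define T where "T = grid_weights N I \<times> {w. set w \<subseteq> I} \<times> {v. set v \<subseteq> I \<and> length v = L}"
  let ?E = "point_mass (\<delta> powr \<epsilon>) \<kappa> x0 ` T"
  have "\<exists>\<nu>\<in>?E. ennreal (t powr \<epsilon>) * emeasure m (ball x t) \<le> emeasure \<nu> (ball x t)"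
    if m: "m \<in> \<mu> ` \<Delta>" and t: "0 < t" "t < \<delta>" and x: "x \<in> K" for m t x
  proof -
    obtain p where p: "p \<in> \<Delta>" "m = \<mu> p" using m by blast
    interpret ssc_self_similar_measure I S r K p "\<mu> p" by (rule M[OF p(1)])
    obtain q where q: "q \<in> grid_weights N I" "\<And>i. i \<in> I \<Longrightarrow> p i \<le> q i"
      using prob_vector_le_grid_weights[OF finite_I \<open>0 < N\<close> prob_vector] by blast
    obtain w v where wv: "set w \<subseteq> I" "set v \<subseteq> I" "length v = L"
      and near: "dist x (word_map S (w @ v) x0) < t"
      and bound: "ennreal (t powr \<epsilon>) * emeasure (\<mu> p) (ball x t)
        \<le> ennreal (\<delta> powr \<epsilon> * \<kappa> ^ length w * word_prod q w)"
      using scaled_emeasure_ball_le[OF \<delta> x t less_imp_le[OF \<open>0 < \<epsilon>\<close>] x0 L q(2)]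
      unfolding \<kappa>_def by blast
    have "(q, w, v) \<in> T"
      using q(1) wv by (simp add: T_def)
    moreover have "ennreal (t powr \<epsilon>) * emeasure m (ball x t)
        \<le> emeasure (point_mass (\<delta> powr \<epsilon>) \<kappa> x0 (q, w, v)) (ball x t)"
      using bound by (simp add: p(2) emeasure_point_mass_ball[OF near])
    ultimately show ?thesis by blast
  qed
  moreover have "(SUP F\<in>{F. finite F \<and> F \<subseteq> ?E}. \<Sum>m\<in>F. emeasure m (space m)) < \<infinity>"
    unfolding T_def using \<open>0 < \<kappa>\<close> \<kappa>_s by (intro SUP_sum_point_mass_finite) auto
  ultimately show ?thesis
    using \<open>0 < \<delta>\<close> by (intro exI[of _ ?E] exI[of _ \<delta>]) auto
qed

lemma uniform_densities_self_similar:
  assumes D: "\<Delta> \<subseteq> prob_vectors I"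
    and M: "\<And>p. p \<in> \<Delta> \<Longrightarrow> is_self_similar_measure I S p (\<mu> p)"
  shows "uniform_densities K (\<mu> ` \<Delta>)"
proof -
  have ssm: "ssc_self_similar_measure I S r K p (\<mu> p)" if "p \<in> \<Delta>" for p
    using D M that
    by (intro ssc_self_similar_measure.intro[OF ssc_ifs_axioms] ssc_self_similar_measure_axioms.intro) auto
  have "\<forall>m\<in>\<mu> ` \<Delta>. prob_space m \<and> sets m = sets borel \<and> emeasure m (UNIV - K) = 0"
    using ssc_self_similar_measure.prob_space[OF ssm] ssc_self_similar_measure.sets_eq_borel[OF ssm]
      ssc_self_similar_measure.emeasure_compl_K[OF ssm] by blast
  moreover have "\<forall>\<epsilon>>0. \<exists>E :: 'a measure set. \<exists>\<eta>>0. (\<forall>\<nu>\<in>E. sets \<nu> = sets borel) \<and>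
      (SUP F\<in>{F. finite F \<and> F \<subseteq> E}. \<Sum>\<nu>\<in>F. emeasure \<nu> (space \<nu>)) < \<infinity> \<and>
      (\<forall>m\<in>\<mu> ` \<Delta>. \<forall>t. 0 < t \<and> t < \<eta> \<longrightarrow> (\<forall>x\<in>K. \<exists>\<nu>\<in>E.
        ennreal (t powr \<epsilon>) * emeasure m (ball x t) \<le> emeasure \<nu> (ball x t)))"
    by (intro allI impI ex_dominating_point_masses[OF ssm])
  ultimately show ?thesis
    unfolding uniform_densities_def by (rule conjI)
qed

end

theorem propositionp:
  fixes I :: "'i set" and S :: "'i \<Rightarrow> 'a::euclidean_space \<Rightarrow> 'a" and r :: "'i \<Rightarrow> real"
    and K :: "'a set" and \<Delta> :: "('i \<Rightarrow> real) set" and \<mu> :: "('i \<Rightarrow> real) \<Rightarrow> 'a measure"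
  assumes "finite I" and "I \<noteq> {}"
    and "\<And>i. i \<in> I \<Longrightarrow> contracting_similarity (S i) (r i)"
    and "compact K" and "K \<noteq> {}" and "K = (\<Union>i\<in>I. S i ` K)"
    and "\<And>i j. i \<in> I \<Longrightarrow> j \<in> I \<Longrightarrow> i \<noteq> j \<Longrightarrow> S i ` K \<inter> S j ` K = {}"
    and "\<Delta> \<subseteq> prob_vectors I"
    and "\<And>p. p \<in> \<Delta> \<Longrightarrow> is_self_similar_measure I S p (\<mu> p)"
  shows "uniform_densities K (\<mu> ` \<Delta>)"
proof -
  interpret ssc_ifs I S r K
    by (rule ssc_ifs.intro[OF assms(1-7)])
  show ?thesis
    using assms(8,9) by (rule uniform_densities_self_similar)
qed

end
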